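(* In the setting described in the context, for every $i$ with $1\le i<m-1$, $\Phi(p_i,p_{i+1})\le 2\cdot L_1(\overline{p}_i,\overline{q}_i)$.
   Context: $P$ is a finite set of points in the plane, $s,t\in P$ distinct, and coordinates are chosen so that $t=(0,0)$ and $s$ lies in $C_2^t$ below the line $\ell_t^-=\{x+y=0\}$. Cones: $C_0^v=\{x\ge v_x,y\le v_y\}$, $C_1^v=\{x\ge v_x,y\ge v_y\}$, $C_2^v=\{x\le v_x,y\ge v_y\}$, $C_3^v=\{x\le v_x,y\le v_y\}$ with bisector directions $(1,-1),(1,1),(-1,1),(-1,-1)$. The $\Theta_4$-graph of $P$ has, for each $v\in P$ and cone $C_i^v$ containing a point of $P\setminus\{v\}$, a directed edge from $v$ to a point $w$ of $(P\setminus\{v\})\cap C_i^v$ minimizing the projection of $w-v$ onto the bisector direction (the neighbour of $v$ in $C_i^v$). For a point $p$, $\ell_p^+$ is the line through $p$ of slope $+1$, and $\overline{p}$ denotes the intersection point of $\ell_t^-$ and $\ell_p^+$. $L_1$ denotes the $L_1$ distance. Algorithm: for a vertex $v$, let $T(v,\ell_t^-)=C_1^v\cap\{x+y\le0\}$ if $v_x+v_y<0$, $T(v,\ell_t^-)=C_3^v\cap\{x+y\ge0\}$ if $v_x+v_y>0$, and $\{v\}$ if $v_x+v_y=0$; $v$ is clean if $T(v,\ell_t^-)$ contains no point of $P$ other than $v$. Starting at $v=s$, while $v\ne t$: if $v$ is not clean, take a sweeping step (go to the neighbour of $v$ in $C_1^v$, resp. $C_3^v$); otherwise take a greedy step (go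 to the neighbour of $v$ in the cone $C_i^v$ containing $t$). Let $(p_1,q_1),\dots,(p_{m-1},q_{m-1})$ be, in order, the edges traversed by greedy steps, and set $p_m=t$. Potential: for $1\le i<m-1$, $\Phi(p_i,p_{i+1})=L_1(p_i,q_i)+L_1(q_i,\overline{p}_{i+1})-L_1(p_i,\overline{p}_i)$. *)

theory Defs
  imports Complex_Main
begin

type_synonym point = "real \<times> real"

definition cone :: "nat \<Rightarrow> point \<Rightarrow> point \<Rightarrow> bool" where
  "cone i v w \<longleftrightarrow>
     (if i = 0 then fst w \<ge> fst v \<and> snd w \<le> snd v
      else if i = 1 then fst w \<ge> fst v \<and> snd w \<ge> snd v
      else if i = 2 then fst w \<le> fst v \<and> snd w \<ge> snd v
      else fst w \<le> fst v \<and> snd w \<le> snd v)"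

definition bisector :: "nat \<Rightarrow> point" where
  "bisector i = (if i = 0 then (1, -1) else if i = 1 then (1, 1)
                 else if i = 2 then (-1, 1) else (-1, -1))"

text \<open>Projection of w - v onto the bisector direction of cone i (up to the
  positive factor 1/sqrt 2, irrelevant for minimisation).\<close>
definition proj :: "nat \<Rightarrow> point \<Rightarrow> point \<Rightarrow> real" where
  "proj i v w = (fst w - fst v) * fst (bisector i) + (snd w - snd v) * snd (bisector i)"

definition is_nb :: "point set \<Rightarrow> point \<Rightarrow> nat \<Rightarrow> point \<Rightarrow> bool" where
  "is_nb P v i w \<longleftrightarrow> w \<in> P \<and> w \<noteq> v \<and> cone i v w \<and>
     (\<forall>u\<in>P - {v}. cone i v u \<longrightarrow> proj i v w \<le> proj i v u)"

text \<open>nb is a Theta_4 graph of P: for each vertex and each nonempty cone, it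
  selects a neighbour (ties broken arbitrarily).\<close>
definition theta4 :: "point set \<Rightarrow> (point \<Rightarrow> nat \<Rightarrow> point) \<Rightarrow> bool" where
  "theta4 P nb \<longleftrightarrow> (\<forall>v\<in>P. \<forall>i<4. (\<exists>u\<in>P - {v}. cone i v u) \<longrightarrow> is_nb P v i (nb v i))"

definition Ttri :: "point \<Rightarrow> point set" where
  "Ttri v = (if fst v + snd v < 0 then {w. cone 1 v w \<and> fst w + snd w \<le> 0}
             else if fst v + snd v > 0 then {w. cone 3 v w \<and> fst w + snd w \<ge> 0}
             else {v})"

definition clean :: "point set \<Rightarrow> point \<Rightarrow> bool" where
  "clean P v \<longleftrightarrow> Ttri v \<inter> P \<subseteq> {v}"

text \<open>path 0, ..., path k is a run of the routing algorithm from s to t = (0,0)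
  in the Theta_4 graph nb.\<close>
definition is_run :: "point set \<Rightarrow> (point \<Rightarrow> nat \<Rightarrow> point) \<Rightarrow> point \<Rightarrow> (nat \<Rightarrow> point) \<Rightarrow> nat \<Rightarrow> bool" where
  "is_run P nb s path k \<longleftrightarrow>
     path 0 = s \<and> path k = (0, 0) \<and> (\<forall>j<k. path j \<noteq> (0, 0)) \<and>
     (\<forall>j<k.
        (\<not> clean P (path j) \<longrightarrow>
           path (Suc j) = nb (path j) (if fst (path j) + snd (path j) < 0 then 1 else 3)) \<and>
        (clean P (path j) \<longrightarrow>
           (\<exists>i<4. cone i (path j) (0, 0) \<and> path (Suc j) = nb (path j) i)))"

text \<open>The greedy edges (p_1,q_1), ..., (p_{m-1},q_{m-1}) in order (0-indexed list).\<close>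
definition greedy_edges :: "point set \<Rightarrow> (nat \<Rightarrow> point) \<Rightarrow> nat \<Rightarrow> (point \<times> point) list" where
  "greedy_edges P path k = [(path j, path (Suc j)). j \<leftarrow> [0..<k], clean P (path j)]"

definition L1 :: "point \<Rightarrow> point \<Rightarrow> real" where
  "L1 a b = \<bar>fst a - fst b\<bar> + \<bar>snd a - snd b\<bar>"

text \<open>pbar p = intersection of l_t^- (x+y=0) with the slope +1 line through p.\<close>
definition pbar :: "point \<Rightarrow> point" where
  "pbar p = ((fst p - snd p) / 2, (snd p - fst p) / 2)"

definition Phi :: "point \<Rightarrow> point \<Rightarrow> point \<Rightarrow> real" where
  "Phi p q p' = L1 p q + L1 q (pbar p') - L1 p (pbar p)"

end

theory Submission
  imports Defs
begin

text \<open>In the rotated coordinates u = x + y and w = x - y (diag_sum and diag_diff) the L1 distance is the maximum of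
  the coordinate differences, and pbar p is the point with u = 0 and the same w as p.
  A greedy step leaves a clean vertex through cone 0 or 2 (cones 1 and 3 would contain t
  inside the empty triangle), so it changes u by at most the change in w. A sweeping step
  towards l_t^- changes w by at most the decrease of the distance to l_t^- in u, and these
  bounds telescope along the sweeps between two greedy steps. Hence the edge (p_i, q_i)
  has L1 length |w(q_i) - w(p_i)| = L1(pbar p_i, pbar q_i), the sweeps bring q_i to within
  L1 distance |u(q_i)| of pbar p_(i+1), and the potential is at most
  |w(q_i) - w(p_i)| + |u(q_i)| - |u(p_i)|, which is at most twice that length.\<close>

abbreviation diag_sum :: "point \<Rightarrow> real" where
  "diag_sum p \<equiv> fst p + snd p"

abbreviation diag_diff :: "point \<Rightarrow> real" where
  "diag_diff p \<equiv> fst p - snd p"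

abbreviation sweep_cone :: "point \<Rightarrow> nat" where
  "sweep_cone v \<equiv> if diag_sum v < 0 then 1 else 3"

lemma L1_eq_max_diag:
  "L1 a b = max \<bar>diag_sum a - diag_sum b\<bar> \<bar>diag_diff a - diag_diff b\<bar>"
  unfolding L1_def max_def by (auto simp: abs_if)

lemma diag_sum_pbar [simp]: "diag_sum (pbar p) = 0"
  by (simp add: pbar_def field_simps)

lemma diag_diff_pbar [simp]: "diag_diff (pbar p) = diag_diff p"
  by (simp add: pbar_def field_simps)

lemma Phi_le_twice_L1_pbar:
  assumes greedy: "\<bar>diag_sum q - diag_sum p\<bar> \<le> \<bar>diag_diff q - diag_diff p\<bar>"
    and sweep: "\<bar>diag_diff p' - diag_diff q\<bar> \<le> \<bar>diag_sum q\<bar> - \<bar>diag_sum p'\<bar>"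
  shows "Phi p q p' \<le> 2 * L1 (pbar p) (pbar q)"
proof -
  define d where "d = \<bar>diag_diff q - diag_diff p\<bar>"
  have "L1 p q = d"
    using greedy by (simp add: L1_eq_max_diag d_def abs_minus_commute)
  moreover have "L1 q (pbar p') = \<bar>diag_sum q\<bar>"
    using sweep by (simp add: L1_eq_max_diag abs_minus_commute)
  moreover have "L1 p (pbar p) = \<bar>diag_sum p\<bar>"
    by (simp add: L1_eq_max_diag)
  moreover have "L1 (pbar p) (pbar q) = d"
    by (simp add: L1_eq_max_diag d_def abs_minus_commute)
  moreover have "\<bar>diag_sum q\<bar> - \<bar>diag_sum p\<bar> \<le> d"
    using greedy d_def by linarith
  ultimately show ?thesis
    unfolding Phi_def by linarith
qed

lemma theta4_is_nb:
  assumes "theta4 P nb" "v \<in> P" "i < 4" "u \<in> P" "u \<noteq> v" "cone i v u"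
  shows "is_nb P v i (nb v i)"
  using assms unfolding theta4_def by blast

lemma not_clean_witness:
  assumes "\<not> clean P v"
  obtains r where "r \<in> P" "r \<noteq> v" "cone (sweep_cone v) v r"
    "proj (sweep_cone v) v r \<le> \<bar>diag_sum v\<bar>"
proof -
  from assms obtain r where r: "r \<in> Ttri v" "r \<in> P" "r \<noteq> v"
    unfolding clean_def by blast
  then have "cone (sweep_cone v) v r \<and> proj (sweep_cone v) v r \<le> \<bar>diag_sum v\<bar>"
    by (auto simp: Ttri_def cone_def proj_def bisector_def split: if_splits)
  with r that show ?thesis by blast
qed

text \<open>The sweeping neighbour lies in the same cone as a point of T(v, l_t^-), and no
  farther along the bisector, so it does not cross l_t^-.\<close>

lemma sweep_step_diag:
  assumes "theta4 P nb" "v \<in> P" "\<not> clean P v"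
  defines "w \<equiv> nb v (sweep_cone v)"
  shows "\<bar>diag_diff w - diag_diff v\<bar> \<le> \<bar>diag_sum v\<bar> - \<bar>diag_sum w\<bar>"
proof -
  obtain r where r: "r \<in> P" "r \<noteq> v" "cone (sweep_cone v) v r"
    "proj (sweep_cone v) v r \<le> \<bar>diag_sum v\<bar>"
    using not_clean_witness[OF assms(3)] .
  have "is_nb P v (sweep_cone v) w"
    unfolding w_def by (rule theta4_is_nb[OF assms(1,2) _ r(1-3)]) simp
  then have "cone (sweep_cone v) v w" "proj (sweep_cone v) v w \<le> \<bar>diag_sum v\<bar>"
    using r unfolding is_nb_def by force+
  then show ?thesis
    by (auto simp: cone_def proj_def bisector_def abs_if split: if_splits)
qed

lemma clean_target_cone:
  assumes "clean P v" "v \<noteq> (0, 0)" "(0, 0) \<in> P" "i < 4" "cone i v (0, 0)"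
  shows "i = 0 \<or> i = 2"
proof (rule ccontr)
  assume "\<not> (i = 0 \<or> i = 2)"
  with assms(4,5) have "(i = 1 \<and> fst v \<le> 0 \<and> snd v \<le> 0) \<or> (i = 3 \<and> fst v \<ge> 0 \<and> snd v \<ge> 0)"
    by (auto simp: cone_def split: if_splits)
  with assms(2) have "(0, 0) \<in> Ttri v"
    by (cases v) (auto simp: Ttri_def cone_def)
  with assms(1-3) show False
    unfolding clean_def by blast
qed

lemma greedy_step_diag:
  assumes "theta4 P nb" "v \<in> P" "clean P v" "v \<noteq> (0, 0)" "(0, 0) \<in> P"
    and "i < 4" "cone i v (0, 0)"
  defines "w \<equiv> nb v i"
  shows "\<bar>diag_sum w - diag_sum v\<bar> \<le> \<bar>diag_diff w - diag_diff v\<bar>"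
proof -
  have "is_nb P v i w"
    unfolding w_def using theta4_is_nb assms(1,2,4-7) by metis
  then have "cone i v w"
    unfolding is_nb_def by blast
  moreover have "i = 0 \<or> i = 2"
    using clean_target_cone assms(3-7) by blast
  ultimately show ?thesis
    by (auto simp: cone_def abs_if)
qed

lemma run_step_is_nb:
  assumes "theta4 P nb" "is_run P nb s path k" "(0, 0) \<in> P" "path j \<in> P" "j < k"
  shows "\<exists>i<4. is_nb P (path j) i (path (Suc j))"
proof (cases "clean P (path j)")
  case True
  with assms(2,5) obtain i where i: "i < 4" "cone i (path j) (0, 0)"
      "path (Suc j) = nb (path j) i" and "path j \<noteq> (0, 0)"
    unfolding is_run_def by blast
  then have "is_nb P (path j) i (path (Suc j))"
    using theta4_is_nb[OF assms(1,4) i(1) assms(3) _ i(2)] by simp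
  with i(1) show ?thesis
    by blast
next
  case False
  then obtain r where r: "r \<in> P" "r \<noteq> path j" "cone (sweep_cone (path j)) (path j) r"
    by (rule not_clean_witness)
  have "sweep_cone (path j) < 4"
    by simp
  moreover have "path (Suc j) = nb (path j) (sweep_cone (path j))"
    using assms(2,5) False unfolding is_run_def by blast
  ultimately show ?thesis
    using theta4_is_nb[OF assms(1,4) _ r] by auto
qed

lemma run_path_in_P:
  assumes "theta4 P nb" "is_run P nb s path k" "s \<in> P" "(0, 0) \<in> P" "j \<le> k"
  shows "path j \<in> P"
  using assms(5)
proof (induction j)
  case 0
  with assms(2,3) show ?case
    by (simp add: is_run_def)
next
  case (Suc j)
  then show ?case
    using run_step_is_nb[OF assms(1,2,4)] unfolding is_nb_def by force
qed

lemma run_greedy_step_diag: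
  assumes "theta4 P nb" "is_run P nb s path k" "s \<in> P" "(0, 0) \<in> P"
    and "a < k" "clean P (path a)"
  shows "\<bar>diag_sum (path (Suc a)) - diag_sum (path a)\<bar>
    \<le> \<bar>diag_diff (path (Suc a)) - diag_diff (path a)\<bar>"
proof -
  obtain ic where ic: "ic < 4" "cone ic (path a) (0, 0)" "path (Suc a) = nb (path a) ic"
    and "path a \<noteq> (0, 0)"
    using assms(2,5,6) unfolding is_run_def by blast
  have "path a \<in> P"
    using run_path_in_P[OF assms(1-4)] assms(5) by simp
  from greedy_step_diag[OF assms(1) this assms(6) \<open>path a \<noteq> (0, 0)\<close> assms(4) ic(1,2)]
  show ?thesis
    unfolding ic(3) .
qed

lemma sweep_run_diag:
  assumes "theta4 P nb" "is_run P nb s path k" "s \<in> P" "(0, 0) \<in> P"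
    and "a \<le> b" "b \<le> k" "\<And>c. a \<le> c \<Longrightarrow> c < b \<Longrightarrow> \<not> clean P (path c)"
  shows "\<bar>diag_diff (path b) - diag_diff (path a)\<bar>
    \<le> \<bar>diag_sum (path a)\<bar> - \<bar>diag_sum (path b)\<bar>"
  using assms(5-7)
proof (induction b rule: dec_induct)
  case base
  then show ?case by simp
next
  case (step n)
  then have "n < k" "\<not> clean P (path n)"
    by auto
  moreover from this have "path (Suc n) = nb (path n) (sweep_cone (path n))"
    using assms(2) unfolding is_run_def by blast
  ultimately have "\<bar>diag_diff (path (Suc n)) - diag_diff (path n)\<bar>
      \<le> \<bar>diag_sum (path n)\<bar> - \<bar>diag_sum (path (Suc n))\<bar>"
    using sweep_step_diag[OF assms(1) run_path_in_P[OF assms(1-4)]] by simp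
  moreover have "\<bar>diag_diff (path n) - diag_diff (path a)\<bar>
      \<le> \<bar>diag_sum (path a)\<bar> - \<bar>diag_sum (path n)\<bar>"
    using step.IH step.prems by force
  ultimately show ?case
    by linarith
qed

lemma greedy_edges_eq_map_filter:
  "greedy_edges P path k = map (\<lambda>j. (path j, path (Suc j))) (filter (\<lambda>j. clean P (path j)) [0..<k])"
  by (induction k) (auto simp: greedy_edges_def)

lemma filter_upt_nth_gap:
  assumes "Suc i < length (filter Q [0..<k])"
    and "filter Q [0..<k] ! i < c" "c < filter Q [0..<k] ! Suc i"
  shows "\<not> Q c"
proof
  define js where "js = filter Q [0..<k]"
  assume "Q c"
  moreover have "c < k"
    using assms nth_mem[OF assms(1)] by auto
  ultimately have "c \<in> set js"
    unfolding js_def by simp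
  then obtain n where n: "n < length js" "js ! n = c"
    by (auto simp: in_set_conv_nth)
  have "sorted js"
    unfolding js_def by (rule sorted_wrt_filter) simp
  then show False
    using n assms sorted_nth_mono[of js n i] sorted_nth_mono[of js "Suc i" n]
    unfolding js_def[symmetric] by (cases "n \<le> i") auto
qed

lemma greedy_edges_consecutive:
  assumes "Suc i < length (greedy_edges P path k)"
  obtains a b where "a < b" "b < k" "clean P (path a)"
    "\<And>c. a < c \<Longrightarrow> c < b \<Longrightarrow> \<not> clean P (path c)"
    "greedy_edges P path k ! i = (path a, path (Suc a))"
    "greedy_edges P path k ! Suc i = (path b, path (Suc b))"
proof -
  define js where "js = filter (\<lambda>j. clean P (path j)) [0..<k]"
  have edges: "greedy_edges P path k = map (\<lambda>j. (path j, path (Suc j))) js"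
    unfolding js_def by (rule greedy_edges_eq_map_filter)
  with assms have len: "Suc i < length js"
    by simp
  define a b where "a = js ! i" and "b = js ! Suc i"
  have "sorted_wrt (<) js"
    unfolding js_def by (rule sorted_wrt_filter) simp
  with len have "a < b"
    unfolding a_def b_def by (simp add: sorted_wrt_nth_less)
  have "a \<in> set js" "b \<in> set js"
    unfolding a_def b_def using len by simp_all
  then have "b < k" "clean P (path a)"
    unfolding js_def by simp_all
  moreover have "\<not> clean P (path c)" if "a < c" "c < b" for c
    using filter_upt_nth_gap[of i "\<lambda>j. clean P (path j)" k c] len that
    unfolding a_def b_def js_def by simp
  ultimately show ?thesis
    using that[OF \<open>a < b\<close>] edges len unfolding a_def b_def by simp
qed

theorem lemma4:
  fixes P :: "point set" and s :: point and nb :: "point \<Rightarrow> nat \<Rightarrow> point"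
    and path :: "nat \<Rightarrow> point" and k :: nat and i :: nat
  assumes "finite P" and "s \<in> P" and "(0, 0) \<in> P" and "s \<noteq> (0, 0)"
    and "cone 2 (0, 0) s" and "fst s + snd s < 0"
    and "theta4 P nb"
    and "is_run P nb s path k"
    and "Suc i < length (greedy_edges P path k)"
  shows "Phi (fst (greedy_edges P path k ! i)) (snd (greedy_edges P path k ! i))
             (fst (greedy_edges P path k ! Suc i))
         \<le> 2 * L1 (pbar (fst (greedy_edges P path k ! i))) (pbar (snd (greedy_edges P path k ! i)))"
proof -
  obtain a b where ab: "a < b" "b < k" "clean P (path a)"
      "\<And>c. a < c \<Longrightarrow> c < b \<Longrightarrow> \<not> clean P (path c)"
    and edges: "greedy_edges P path k ! i = (path a, path (Suc a))"
      "greedy_edges P path k ! Suc i = (path b, path (Suc b))"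
    using greedy_edges_consecutive[OF assms(9)] by blast
  have greedy: "\<bar>diag_sum (path (Suc a)) - diag_sum (path a)\<bar>
      \<le> \<bar>diag_diff (path (Suc a)) - diag_diff (path a)\<bar>"
    using run_greedy_step_diag[OF assms(7,8,2,3)] ab by simp
  have sweep: "\<bar>diag_diff (path b) - diag_diff (path (Suc a))\<bar>
      \<le> \<bar>diag_sum (path (Suc a))\<bar> - \<bar>diag_sum (path b)\<bar>"
    using sweep_run_diag[OF assms(7,8,2,3), of "Suc a" b] ab by simp
  show ?thesis
    using Phi_le_twice_L1_pbar[OF greedy sweep] unfolding edges by simp
qed

end
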